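(* In the setting described in the context, suppose $K\in\mathbb{R}^{m\times n}$ and a symmetric $P\in\mathbb{R}^{n\times n}$ with $P>0$ satisfy $P-(A+BK)P(A+BK)^\top>0$ for all $(A,B)\in\Sigma$. Then $\operatorname{im}\begin{bmatrix} I\\ K\end{bmatrix}\subseteq\operatorname{im}\begin{bmatrix} X_-\\ U_-\end{bmatrix}$.
   Context: Consider the system $x(t+1)=A_sx(t)+B_su(t)+w(t)$ with unknown $A_s\in\mathbb{R}^{n\times n}$, $B_s\in\mathbb{R}^{n\times m}$ and unknown noise $w$. Data: $X_+=[x(1)\ \cdots\ x(T)]$, $X_-=[x(0)\ \cdots\ x(T-1)]$, $U_-=[u(0)\ \cdots\ u(T-1)]$, with $X_+=A_sX_-+B_sU_-+W_-$ where $W_-=[w(0)\ \cdots\ w(T-1)]$ satisfies $\begin{bmatrix} I\\ W_-^\top\end{bmatrix}^\top\begin{bmatrix}\Phi_{11} & \Phi_{12}\\ \Phi_{12}^\top & \Phi_{22}\end{bmatrix}\begin{bmatrix} I\\ W_-^\top\end{bmatrix}\ge0$ for known $\Phi_{11}=\Phi_{11}^\top\in\mathbb{R}^{n\times n}$, $\Phi_{12}\in\mathbb{R}^{n\times T}$, $\Phi_{22}=\Phi_{22}^\top\in\mathbb{R}^{T\times T}$, $\Phi_{22}<0$. $\Sigma$ is the set of all $(A,B)\in\mathbb{R}^{n\times n}\times\mathbb{R}^{n\times m}$ such that $X_+=AX_-+BU_-+W$ for some $W\in\mathbb{R}^{n\times T}$ satisfying the same noise inequality (so $(A_s,B_s)\in\Sigma$).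 *)

theory Defs
  imports "HOL-Analysis.Analysis"
begin

text \<open>Matrices are HOL-Analysis matrices: an r x c real matrix has type real^'c^'r.
  The state dimension n, input dimension m and number of samples T are the
  cardinalities of finite index types 'n, 'm, 't.\<close>

definition sym_mat :: "real^'n^'n \<Rightarrow> bool" where
  "sym_mat M \<longleftrightarrow> transpose M = M"

definition psd :: "real^'n^'n \<Rightarrow> bool" where
  "psd M \<longleftrightarrow> sym_mat M \<and> (\<forall>x. 0 \<le> x \<bullet> (M *v x))"

definition pd :: "real^'n^'n \<Rightarrow> bool" where
  "pd M \<longleftrightarrow> sym_mat M \<and> (\<forall>x. x \<noteq> 0 \<longrightarrow> 0 < x \<bullet> (M *v x))"

definition nd :: "real^'n^'n \<Rightarrow> bool" where
  "nd M \<longleftrightarrow> pd (- M)"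

text \<open>The quadratic matrix inequality
  [I; W^T]^T [Phi11 Phi12; Phi12^T Phi22] [I; W^T] \<ge> 0, expanded blockwise.\<close>
definition noise_ok ::
  "real^'n^'n \<Rightarrow> real^'t^'n \<Rightarrow> real^'t^'t \<Rightarrow> real^'t^'n \<Rightarrow> bool" where
  "noise_ok Phi11 Phi12 Phi22 W \<longleftrightarrow>
     psd (Phi11 + Phi12 ** transpose W + W ** transpose Phi12 + W ** Phi22 ** transpose W)"

definition Sigma_set ::
  "real^'n^'n \<Rightarrow> real^'t^'n \<Rightarrow> real^'t^'t \<Rightarrow> real^'t^'n \<Rightarrow> real^'t^'n \<Rightarrow> real^'t^'m
   \<Rightarrow> ((real^'n^'n) \<times> (real^'m^'n)) set" where
  "Sigma_set Phi11 Phi12 Phi22 Xp Xm Um =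
     {(A, B). \<exists>W. Xp = A ** Xm + B ** Um + W \<and> noise_ok Phi11 Phi12 Phi22 W}"

definition vstack :: "real^'c^'r \<Rightarrow> real^'c^'s \<Rightarrow> real^'c^('r + 's)" where
  "vstack M N = (\<chi> i j. case i of Inl a \<Rightarrow> M $ a $ j | Inr b \<Rightarrow> N $ b $ j)"

definition mat_im :: "real^'c^'r \<Rightarrow> (real^'r) set" where
  "mat_im M = range (\<lambda>v. M *v v)"

end

theory Submission
  imports Defs
begin

text \<open>Suppose some column [v; K v] of [I; K] lies outside the image of [X_-; U_-]. Then there is
  a row vector (\<xi>, \<eta>) annihilating [X_-; U_-] but not [v; K v], so \<zeta> = \<xi> + K^T \<eta> is nonzero.
  Shifting (A_s, B_s) by c \<zeta> (\<xi>, \<eta>) leaves the data equation, hence membership in \<Sigma>,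
  untouched, while it shifts the closed loop A + B K by the rank-one term c \<zeta> \<zeta>^T. For large c
  the quadratic form of P - (A + B K) P (A + B K)^T at \<zeta> becomes nonpositive, contradicting
  the assumed Lyapunov inequality on all of \<Sigma>.\<close>

definition outer :: "real^'a \<Rightarrow> real^'b \<Rightarrow> real^'b^'a" where
  "outer a b = (\<chi> i j. a$i * b$j)"

lemma vector_matrix_mult_outer: "y v* outer a b = (y \<bullet> a) *\<^sub>R b"
  by (simp add: outer_def vector_matrix_mult_def vec_eq_iff inner_vec_def sum_distrib_right mult.assoc)

lemma outer_zero_right [simp]: "outer a (0::real^'b) = 0"
  by (simp add: outer_def vec_eq_iff)

lemma matrix_mult_add_outer:
  "(A + c *\<^sub>R outer z \<xi>) ** X + (B + c *\<^sub>R outer z \<eta>) ** U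
     = A ** X + B ** U + c *\<^sub>R outer z (\<xi> v* X + \<eta> v* U)"
  by (simp add: outer_def matrix_matrix_mult_def vector_matrix_mult_def vec_eq_iff
      sum.distrib sum_distrib_left algebra_simps)

lemma closed_loop_add_outer:
  "A + c *\<^sub>R outer z \<xi> + (B + c *\<^sub>R outer z \<eta>) ** K = A + B ** K + c *\<^sub>R outer z (\<xi> + \<eta> v* K)"
  by (simp add: outer_def matrix_matrix_mult_def vector_matrix_mult_def vec_eq_iff
      sum.distrib sum_distrib_left algebra_simps)

lemma sum_UNIV_Plus:
  "sum g (UNIV :: ('a::finite + 'b::finite) set) = (\<Sum>a\<in>UNIV. g (Inl a)) + (\<Sum>b\<in>UNIV. g (Inr b))"
  using sum.Plus[of "UNIV::'a set" "UNIV::'b set" g] by (simp add: comp_def)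

lemma vector_matrix_mult_vstack:
  "y v* vstack M N = (\<chi> i. y $ Inl i) v* M + (\<chi> i. y $ Inr i) v* N"
  by (simp add: vstack_def vector_matrix_mult_def vec_eq_iff sum_UNIV_Plus)

lemma inner_vstack_mult:
  "y \<bullet> (vstack M N *v v) = (\<chi> i. y $ Inl i) \<bullet> (M *v v) + (\<chi> i. y $ Inr i) \<bullet> (N *v v)"
  by (simp add: vstack_def inner_vec_def matrix_vector_mult_def sum_UNIV_Plus)

lemma left_null_vector_if_not_in_mat_im:
  fixes N :: "real^'c^'r"
  assumes "z \<notin> mat_im N"
  obtains y where "y v* N = 0" and "y \<bullet> z \<noteq> 0"
proof -
  have "subspace (mat_im N)"
    unfolding mat_im_def by (rule linear_subspace_image) auto
  then have span_im: "span (mat_im N) = mat_im N"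
    by simp
  obtain p y where p: "p \<in> mat_im N" and orth: "\<And>w. w \<in> mat_im N \<Longrightarrow> orthogonal y w"
    and z: "z = p + y"
    using orthogonal_subspace_decomp_exists[of "mat_im N" z] unfolding span_im by metis
  have "y \<bullet> (N *v t) = 0" for t
    using orth[of "N *v t"] by (auto simp: orthogonal_def mat_im_def)
  then have "(y v* N) \<bullet> (y v* N) = 0"
    by (simp add: dot_lmul_matrix)
  then have "y v* N = 0"
    by simp
  moreover have "y \<bullet> z = y \<bullet> y"
    using orth[OF p] by (simp add: z inner_add_right orthogonal_def)
  moreover have "y \<noteq> 0"
    using assms p z by auto
  ultimately show thesis
    using that by simp
qed

lemma exists_quadratic_ge:
  fixes \<alpha> \<beta> \<gamma> \<delta> :: real
  assumes "\<gamma> > 0"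
  shows "\<exists>c. \<delta> \<le> \<alpha> + \<beta> * c + \<gamma> * c\<^sup>2"
proof -
  define S where "S = \<bar>\<alpha>\<bar> + \<bar>\<beta>\<bar> + \<bar>\<delta>\<bar>"
  define c where "c = 1 + S / \<gamma>"
  have "S \<ge> 0"
    unfolding S_def by simp
  then have c1: "c \<ge> 1"
    unfolding c_def using assms by simp
  have "\<bar>\<alpha>\<bar> + \<bar>\<beta> * c\<bar> + \<bar>\<delta>\<bar> \<le> c * S"
    using c1 mult_left_mono[OF c1, of "\<bar>\<alpha>\<bar>"] mult_left_mono[OF c1, of "\<bar>\<delta>\<bar>"]
    unfolding S_def by (simp add: abs_mult distrib_left mult.commute)
  also have "\<dots> \<le> c * (\<gamma> + S)"
    using c1 assms by simp
  also have "\<dots> = \<gamma> * c\<^sup>2"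
    unfolding c_def using assms by (simp add: field_simps power2_eq_square)
  finally have "\<bar>\<alpha>\<bar> + \<bar>\<beta> * c\<bar> + \<bar>\<delta>\<bar> \<le> \<gamma> * c\<^sup>2" .
  then have "\<delta> \<le> \<alpha> + \<beta> * c + \<gamma> * c\<^sup>2"
    using abs_ge_self[of \<delta>] abs_ge_minus_self[of \<alpha>] abs_ge_minus_self[of "\<beta> * c"] by linarith
  then show ?thesis ..
qed

lemma quadratic_form_congruence:
  fixes y :: "real^'n"
  shows "y \<bullet> ((M ** P ** transpose M) *v y) = (y v* M) \<bullet> (P *v (y v* M))"
proof -
  have "(M ** P ** transpose M) *v y = M *v (P *v (y v* M))"
    by (simp add: matrix_vector_mul_assoc[symmetric])
  then show ?thesis
    by (simp add: dot_lmul_matrix)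
qed

lemma pd_imp_sym_mat: "pd P \<Longrightarrow> sym_mat P"
  by (simp add: pd_def)

lemma quadratic_form_add_scaleR:
  fixes P :: "real^'n^'n"
  assumes "sym_mat P"
  shows "(q + t *\<^sub>R z) \<bullet> (P *v (q + t *\<^sub>R z))
           = q \<bullet> (P *v q) + 2 * (z \<bullet> (P *v q)) * t + (z \<bullet> (P *v z)) * t\<^sup>2"
proof -
  have "q \<bullet> (P *v z) = z \<bullet> (P *v q)"
    using assms unfolding sym_mat_def
    by (metis dot_lmul_matrix inner_commute transpose_matrix_vector)
  then show ?thesis
    by (simp add: matrix_vector_right_distrib matrix_vector_mult_scaleR inner_add_left
        inner_add_right power2_eq_square distrib_left)
qed

lemma not_pd_Stein_add_outer:
  fixes P M :: "real^'n^'n" and z :: "real^'n"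
  assumes "pd P" and "z \<noteq> 0"
  obtains c where "\<not> pd (P - (M + c *\<^sub>R outer z z) ** P ** transpose (M + c *\<^sub>R outer z z))"
proof -
  define q where "q = z v* M"
  have "z \<bullet> (P *v z) > 0"
    using assms unfolding pd_def by auto
  then obtain t where t: "z \<bullet> (P *v z) \<le>
      q \<bullet> (P *v q) + 2 * (z \<bullet> (P *v q)) * t + (z \<bullet> (P *v z)) * t\<^sup>2"
    using exists_quadratic_ge by metis
  \<comment> \<open>Since z v* outer z z = (z \<bullet> z) z, the factor 1 / (z \<bullet> z) turns the shift of z v* N into t z.\<close>
  define N where "N = M + (t / (z \<bullet> z)) *\<^sub>R outer z z"
  have "z v* N = q + t *\<^sub>R z"
    using \<open>z \<noteq> 0\<close> unfolding N_def q_def vector_matrix_mult_add_rdistrib vector_scaleR_matrix_ac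
      vector_matrix_mult_outer by simp
  then have "z \<bullet> ((N ** P ** transpose N) *v z) \<ge> z \<bullet> (P *v z)"
    using t quadratic_form_add_scaleR[OF pd_imp_sym_mat[OF \<open>pd P\<close>]]
    by (simp add: quadratic_form_congruence)
  then have "z \<bullet> ((P - N ** P ** transpose N) *v z) \<le> 0"
    by (simp add: matrix_vector_mult_diff_rdistrib inner_diff_right)
  then show thesis
    using that \<open>z \<noteq> 0\<close> unfolding N_def pd_def by (meson not_le)
qed

lemma data_matrix_equation:
  fixes x :: "nat \<Rightarrow> real^'n" and u :: "nat \<Rightarrow> real^'m" and w :: "nat \<Rightarrow> real^'n"
    and idx :: "'t::finite \<Rightarrow> nat"
  assumes "bij_betw idx UNIV {..<CARD('t)}"
    and "\<And>k. k < CARD('t) \<Longrightarrow> x (Suc k) = As *v x k + Bs *v u k + w k"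
  shows "(\<chi> i j. x (Suc (idx j)) $ i) = As ** (\<chi> i j. x (idx j) $ i) + Bs ** (\<chi> i j. u (idx j) $ i)
           + (\<chi> i j. w (idx j) $ i)"
proof -
  have "idx j < CARD('t)" for j
    using assms(1) bij_betwE by blast
  then have "x (Suc (idx j)) $ i = (As *v x (idx j) + Bs *v u (idx j) + w (idx j)) $ i" for i j
    using assms(2) by simp
  then show ?thesis
    by (simp add: vec_eq_iff matrix_matrix_mult_def matrix_vector_mult_def)
qed

lemma Sigma_set_add_outer:
  assumes "(A, B) \<in> Sigma_set Phi11 Phi12 Phi22 Xp Xm Um" and "\<xi> v* Xm + \<eta> v* Um = 0"
  shows "(A + c *\<^sub>R outer z \<xi>, B + c *\<^sub>R outer z \<eta>) \<in> Sigma_set Phi11 Phi12 Phi22 Xp Xm Um"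
  using assms by (simp add: Sigma_set_def matrix_mult_add_outer)

theorem mainTheorem12:
  fixes x :: "nat \<Rightarrow> real^'n" and u :: "nat \<Rightarrow> real^'m" and w :: "nat \<Rightarrow> real^'n"
    and idx :: "'t::finite \<Rightarrow> nat"
    and As :: "real^'n^'n" and Bs :: "real^'m^'n"
    and Phi11 :: "real^'n^'n" and Phi12 :: "real^'t^'n" and Phi22 :: "real^'t^'t"
    and Xp Xm :: "real^'t^'n" and Um :: "real^'t^'m" and Wm :: "real^'t^'n"
    and K :: "real^'n^'m" and P :: "real^'n^'n"
  assumes idx: "bij_betw idx UNIV {..<CARD('t)}"
    and sys: "\<And>k. k < CARD('t) \<Longrightarrow> x (Suc k) = As *v x k + Bs *v u k + w k"
    and Xp_def: "Xp = (\<chi> i j. x (Suc (idx j)) $ i)"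
    and Xm_def: "Xm = (\<chi> i j. x (idx j) $ i)"
    and Um_def: "Um = (\<chi> i j. u (idx j) $ i)"
    and Wm_def: "Wm = (\<chi> i j. w (idx j) $ i)"
    and Phi11_sym: "sym_mat Phi11"
    and Phi22_sym: "sym_mat Phi22"
    and Phi22_neg: "nd Phi22"
    and noise: "noise_ok Phi11 Phi12 Phi22 Wm"
    and P_sym: "sym_mat P"
    and P_pos: "pd P"
    and stab: "\<And>A B. (A, B) \<in> Sigma_set Phi11 Phi12 Phi22 Xp Xm Um \<Longrightarrow>
                 pd (P - (A + B ** K) ** P ** transpose (A + B ** K))"
  shows "mat_im (vstack (mat 1 :: real^'n^'n) K) \<subseteq> mat_im (vstack Xm Um)"
proof (rule subsetI, rule ccontr)
  fix z assume "z \<in> mat_im (vstack (mat 1 :: real^'n^'n) K)" and "z \<notin> mat_im (vstack Xm Um)"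
  then obtain v y where z: "z = vstack (mat 1 :: real^'n^'n) K *v v"
    and "y v* vstack Xm Um = 0" and "y \<bullet> z \<noteq> 0"
    by (metis left_null_vector_if_not_in_mat_im mat_im_def imageE)
  define \<xi> :: "real^'n" where "\<xi> = (\<chi> i. y $ Inl i)"
  define \<eta> :: "real^'m" where "\<eta> = (\<chi> i. y $ Inr i)"
  define \<zeta> where "\<zeta> = \<xi> + \<eta> v* K"
  have annihilates: "\<xi> v* Xm + \<eta> v* Um = 0"
    using \<open>y v* vstack Xm Um = 0\<close> by (simp add: vector_matrix_mult_vstack \<xi>_def \<eta>_def)
  have "\<zeta> \<bullet> v = y \<bullet> z"
    by (simp add: z inner_vstack_mult \<zeta>_def \<xi>_def \<eta>_def inner_add_left dot_lmul_matrix)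
  then obtain c where not_pd: "\<not> pd (P - (As + Bs ** K + c *\<^sub>R outer \<zeta> \<zeta>) ** P
      ** transpose (As + Bs ** K + c *\<^sub>R outer \<zeta> \<zeta>))"
    using not_pd_Stein_add_outer[OF P_pos] \<open>y \<bullet> z \<noteq> 0\<close> by (metis inner_zero_left)
  have "Xp = As ** Xm + Bs ** Um + Wm"
    unfolding Xp_def Xm_def Um_def Wm_def using idx sys by (rule data_matrix_equation)
  with noise have "(As, Bs) \<in> Sigma_set Phi11 Phi12 Phi22 Xp Xm Um"
    unfolding Sigma_set_def by blast
  then have "(As + c *\<^sub>R outer \<zeta> \<xi>, Bs + c *\<^sub>R outer \<zeta> \<eta>) \<in> Sigma_set Phi11 Phi12 Phi22 Xp Xm Um"
    using annihilates by (rule Sigma_set_add_outer)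
  moreover have "As + c *\<^sub>R outer \<zeta> \<xi> + (Bs + c *\<^sub>R outer \<zeta> \<eta>) ** K = As + Bs ** K + c *\<^sub>R outer \<zeta> \<zeta>"
    unfolding closed_loop_add_outer \<zeta>_def ..
  ultimately show False
    using stab not_pd by metis
qed

end
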